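(* Let $x$ be a theory of $APAL_{int}$, $\varphi\in\mathcal{L}_{APAL_{int}}$ and $i$ an agent. If $K_i\varphi\notin x$, then there is a maximally consistent theory $y$ such that $K_ix\subseteq y$ and $\varphi\notin y$.
   Context: $\mathcal{L}_{APAL_{int}}$: $\varphi ::= p \mid \neg\varphi \mid \varphi\wedge\varphi \mid K_i\varphi \mid \mathrm{int}(\varphi)\mid [\varphi]\varphi\mid\Box\varphi$ over a countable $\mathit{Prop}$ and finite non-empty agent set $\mathcal{A}$; $\mathcal{L}_{PAL_{int}}$ its $\Box$-free fragment; $\bot:=p\wedge\neg p$. Necessity forms: $\xi(\sharp)::=\sharp\mid\varphi\to\xi(\sharp)\mid K_i\xi(\sharp)\mid\mathrm{int}(\xi(\sharp))\mid[\varphi]\xi(\sharp)$. $APAL_{int}$: axioms: propositional tautologies; $K_i(\varphi\to\psi)\to(K_i\varphi\to K_i\psi)$; $K_i\varphi\to\varphi$; $K_i\varphi\to K_iK_i\varphi$; $\neg K_i\varphi\to K_i\neg K_i\varphi$; $\mathrm{int}(\varphi\to\psi)\to(\mathrm{int}(\varphi)\to\mathrm{int}(\psi))$; $\mathrm{int}(\varphi)\to\varphi$; $\mathrm{int}(\varphi)\to\mathrm{int}(\mathrm{int}(\varphi))$; $K_i\varphi\to\mathrm{int}(\varphi)$; $[\varphi]p\leftrightarrow(\mathrm{int}(\varphi)\to p)$; $[\varphi]\neg\psi\leftrightarrow(\mathrm{int}(\varphi)\to\neg[\varphi]\psi)$; $[\varphi](\psi\wedge\chi)\leftrightarrow[\varphi]\psi\wedge[\varphi]\chi$;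 $[\varphi]\mathrm{int}(\psi)\leftrightarrow(\mathrm{int}(\varphi)\to\mathrm{int}([\varphi]\psi))$; $[\varphi]K_i\psi\leftrightarrow(\mathrm{int}(\varphi)\to K_i[\varphi]\psi)$; $[\varphi][\psi]\chi\leftrightarrow[\neg[\varphi]\neg\mathrm{int}(\psi)]\chi$; $\Box\varphi\to[\chi]\varphi$ ($\chi\in\mathcal{L}_{PAL_{int}}$). Rules: modus ponens; from $\varphi$ infer $K_i\varphi$; from $\varphi$ infer $\mathrm{int}(\varphi)$; from $\varphi$ infer $[\psi]\varphi$; (DR5) from $\xi([\psi]\chi)$ for all $\psi\in\mathcal{L}_{PAL_{int}}$ infer $\xi(\Box\chi)$. A theory is a set of formulas containing all theorems of $APAL_{int}$ and closed under modus ponens and (DR5); it is consistent iff $\bot\notin$ it; a set of formulas is consistent iff it is contained in a consistent theory; a theory is maximally consistent iff it is consistent and every set properly containing it is inconsistent. $K_ix:=\{\varphi\mid K_i\varphi\in x\}$. *)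

theory Defs
  imports Main
begin

text \<open>Language L_APAL_int over Prop = nat (countable) and a finite nonempty
agent type 'i (finite by class; types are nonempty).\<close>

datatype 'i fm =
    Atom nat
  | Neg "'i fm"
  | Conj "'i fm" "'i fm"
  | K 'i "'i fm"
  | IntO "'i fm"
  | Ann "'i fm" "'i fm"
  | Box "'i fm"

definition Bot :: "'i fm" where
  "Bot = Conj (Atom 0) (Neg (Atom 0))"

definition Imp :: "'i fm \<Rightarrow> 'i fm \<Rightarrow> 'i fm" where
  "Imp a b = Neg (Conj a (Neg b))"

definition Iff :: "'i fm \<Rightarrow> 'i fm \<Rightarrow> 'i fm" where
  "Iff a b = Conj (Imp a b) (Imp b a)"

fun box_free :: "'i fm \<Rightarrow> bool" where
  "box_free (Atom p) = True"
| "box_free (Neg a) = box_free a"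
| "box_free (Conj a b) = (box_free a \<and> box_free b)"
| "box_free (K i a) = box_free a"
| "box_free (IntO a) = box_free a"
| "box_free (Ann a b) = (box_free a \<and> box_free b)"
| "box_free (Box a) = False"

text \<open>Propositional tautologies: formulas true under every boolean valuation
of their maximal non-boolean subformulas (atoms, K, int, announcements, box).\<close>
fun peval :: "('i fm \<Rightarrow> bool) \<Rightarrow> 'i fm \<Rightarrow> bool" where
  "peval v (Neg a) = (\<not> peval v a)"
| "peval v (Conj a b) = (peval v a \<and> peval v b)"
| "peval v a = v a"

definition tautology :: "'i fm \<Rightarrow> bool" where
  "tautology a \<longleftrightarrow> (\<forall>v. peval v a)"

datatype 'i nform =
    Hole
  | NImp "'i fm" "'i nform"
  | NK 'i "'i nform"
  | NIntO "'i nform"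
  | NAnn "'i fm" "'i nform"

fun nfill :: "'i nform \<Rightarrow> 'i fm \<Rightarrow> 'i fm" where
  "nfill Hole c = c"
| "nfill (NImp a f) c = Imp a (nfill f c)"
| "nfill (NK i f) c = K i (nfill f c)"
| "nfill (NIntO f) c = IntO (nfill f c)"
| "nfill (NAnn a f) c = Ann a (nfill f c)"

inductive axiom :: "'i fm \<Rightarrow> bool" where
  A0: "tautology a \<Longrightarrow> axiom a"
| AK: "axiom (Imp (K i (Imp a b)) (Imp (K i a) (K i b)))"
| AT: "axiom (Imp (K i a) a)"
| A4: "axiom (Imp (K i a) (K i (K i a)))"
| A5: "axiom (Imp (Neg (K i a)) (K i (Neg (K i a))))"
| IK: "axiom (Imp (IntO (Imp a b)) (Imp (IntO a) (IntO b)))"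
| IT: "axiom (Imp (IntO a) a)"
| I4: "axiom (Imp (IntO a) (IntO (IntO a)))"
| KI: "axiom (Imp (K i a) (IntO a))"
| RAtom: "axiom (Iff (Ann a (Atom p)) (Imp (IntO a) (Atom p)))"
| RNeg: "axiom (Iff (Ann a (Neg b)) (Imp (IntO a) (Neg (Ann a b))))"
| RConj: "axiom (Iff (Ann a (Conj b c)) (Conj (Ann a b) (Ann a c)))"
| RInt: "axiom (Iff (Ann a (IntO b)) (Imp (IntO a) (IntO (Ann a b))))"
| RK: "axiom (Iff (Ann a (K i b)) (Imp (IntO a) (K i (Ann a b))))"
| RAnn: "axiom (Iff (Ann a (Ann b c)) (Ann (Neg (Ann a (Neg (IntO b)))) c))"
| ABox: "box_free c \<Longrightarrow> axiom (Imp (Box a) (Ann c a))"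

inductive derivable :: "'i fm \<Rightarrow> bool" where
  Ax: "axiom a \<Longrightarrow> derivable a"
| MP: "derivable (Imp a b) \<Longrightarrow> derivable a \<Longrightarrow> derivable b"
| NecK: "derivable a \<Longrightarrow> derivable (K i a)"
| NecInt: "derivable a \<Longrightarrow> derivable (IntO a)"
| NecAnn: "derivable a \<Longrightarrow> derivable (Ann b a)"
| DR5: "(\<And>b. box_free b \<Longrightarrow> derivable (nfill f (Ann b c))) \<Longrightarrow> derivable (nfill f (Box c))"

definition is_theory :: "'i fm set \<Rightarrow> bool" where
  "is_theory x \<longleftrightarrow>
     {a. derivable a} \<subseteq> x
     \<and> (\<forall>a b. Imp a b \<in> x \<longrightarrow> a \<in> x \<longrightarrow> b \<in> x)
     \<and> (\<forall>f c. (\<forall>b. box_free b \<longrightarrow> nfill f (Ann b c) \<in> x) \<longrightarrow> nfill f (Box c) \<in> x)"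

definition consistent_theory :: "'i fm set \<Rightarrow> bool" where
  "consistent_theory x \<longleftrightarrow> is_theory x \<and> Bot \<notin> x"

definition consistent_set :: "'i fm set \<Rightarrow> bool" where
  "consistent_set s \<longleftrightarrow> (\<exists>x. consistent_theory x \<and> s \<subseteq> x)"

definition max_consistent_theory :: "'i fm set \<Rightarrow> bool" where
  "max_consistent_theory x \<longleftrightarrow>
     consistent_theory x \<and> (\<forall>s. x \<subset> s \<longrightarrow> \<not> consistent_set s)"

definition Kset :: "'i \<Rightarrow> 'i fm set \<Rightarrow> 'i fm set" where
  "Kset i x = {a. K i a \<in> x}"

end

theory Submission
  imports Defs "HOL-Library.Countable"
begin

text \<open>\<open>K\<^sub>ix\<close> is itself a theory: necessitation and axiom K give closure under theorems
and modus ponens, and closure under DR5 is DR5 for the necessity form \<open>K\<^sub>i\<xi>\<close>.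
So it suffices to prove a Lindenbaum lemma: every theory omitting \<open>\<phi>\<close> extends to
a maximally consistent theory omitting \<open>\<phi>\<close>. Enumerate all formulas and add
each one or its negation while keeping \<open>\<phi>\<close> out. Closure of the limit under the
infinitary rule DR5 is secured by adding, together with a negated necessity form
\<open>\<not>\<xi>(\<box>\<chi>)\<close>, a witness \<open>\<not>\<xi>([\<psi>]\<chi>)\<close>; such a \<open>\<psi>\<close> exists, since otherwise DR5 for the
necessity form \<open>\<not>\<phi> \<rightarrow> \<xi>\<close> would put \<phi> into the current theory.\<close>

instance fm :: (countable) countable
  by countable_datatype

lemma theory_derivable: "is_theory t \<Longrightarrow> derivable a \<Longrightarrow> a \<in> t"
  unfolding is_theory_def by blast

lemma theory_tautology: "is_theory t \<Longrightarrow> tautology a \<Longrightarrow> a \<in> t"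
  using theory_derivable derivable.Ax axiom.A0 by blast

lemma theory_mp: "is_theory t \<Longrightarrow> Imp a b \<in> t \<Longrightarrow> a \<in> t \<Longrightarrow> b \<in> t"
  unfolding is_theory_def by blast

lemma theory_DR5:
  "is_theory t \<Longrightarrow> (\<And>b. box_free b \<Longrightarrow> nfill f (Ann b c) \<in> t) \<Longrightarrow> nfill f (Box c) \<in> t"
  unfolding is_theory_def by blast

lemma theory_taut_imp:
  "is_theory t \<Longrightarrow> tautology (Imp a b) \<Longrightarrow> a \<in> t \<Longrightarrow> b \<in> t"
  using theory_tautology theory_mp by blast

lemma theory_taut_imp2:
  "is_theory t \<Longrightarrow> tautology (Imp a (Imp b c)) \<Longrightarrow> a \<in> t \<Longrightarrow> b \<in> t \<Longrightarrow> c \<in> t"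
  using theory_tautology theory_mp by blast

lemma nfill_Box_inject: "nfill f (Box c) = nfill g (Box d) \<Longrightarrow> f = g \<and> c = d"
  by (induction f arbitrary: g; case_tac g; auto simp: Imp_def)

definition extend :: "'i fm set \<Rightarrow> 'i fm \<Rightarrow> 'i fm set" where
  "extend t a = {c. Imp a c \<in> t}"

lemma is_theory_extend:
  fixes t :: "'i fm set"
  assumes t: "is_theory t"
  shows "is_theory (extend t a)"
  unfolding is_theory_def
proof (intro conjI allI impI subsetI)
  fix c :: "'i fm" assume "c \<in> {c. derivable c}"
  then show "c \<in> extend t a"
    using theory_taut_imp[OF t, of c "Imp a c"] theory_derivable[OF t]
    by (auto simp: extend_def tautology_def Imp_def)
next
  fix c d assume "Imp c d \<in> extend t a" "c \<in> extend t a"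
  then show "d \<in> extend t a"
    using theory_taut_imp2[OF t, of "Imp a (Imp c d)" "Imp a c" "Imp a d"]
    by (auto simp: extend_def tautology_def Imp_def)
next
  fix f c assume "\<forall>b. box_free b \<longrightarrow> nfill f (Ann b c) \<in> extend t a"
  then have "nfill (NImp a f) (Box c) \<in> t"
    by (intro theory_DR5[OF t]) (auto simp: extend_def)
  then show "nfill f (Box c) \<in> extend t a"
    by (simp add: extend_def)
qed

lemma mem_extend: "is_theory t \<Longrightarrow> a \<in> extend t a"
  by (auto simp: extend_def tautology_def Imp_def intro: theory_tautology)

lemma subset_extend: "is_theory t \<Longrightarrow> t \<subseteq> extend t a"
  using theory_taut_imp[of t _ "Imp a _"]
  by (auto simp: extend_def tautology_def Imp_def)

lemma not_mem_extend_iff: "\<phi> \<notin> extend t a \<longleftrightarrow> Imp a \<phi> \<notin> t"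
  by (simp add: extend_def)

lemma not_mem_extend_or_extend_Neg:
  assumes "is_theory t" "\<phi> \<notin> t"
  shows "\<phi> \<notin> extend t a \<or> \<phi> \<notin> extend t (Neg a)"
  using assms theory_taut_imp2[of t "Imp a \<phi>" "Imp (Neg a) \<phi>" \<phi>]
  by (auto simp: extend_def tautology_def Imp_def)

lemma exists_DR5_witness:
  assumes t: "is_theory t" and "\<phi> \<notin> t" and neg_box: "Neg (nfill f (Box c)) \<in> t"
  shows "\<exists>b. box_free b \<and> \<phi> \<notin> extend t (Neg (nfill f (Ann b c)))"
proof (rule ccontr)
  assume "\<not> ?thesis"
  then have "Imp (Neg \<phi>) (nfill f (Ann b c)) \<in> t" if "box_free b" for b
    using that theory_taut_imp[OF t, of "Imp (Neg (nfill f (Ann b c))) \<phi>" "Imp (Neg \<phi>) (nfill f (Ann b c))"]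
    by (auto simp: extend_def tautology_def Imp_def)
  then have "nfill (NImp (Neg \<phi>) f) (Box c) \<in> t"
    by (intro theory_DR5[OF t]) simp
  then have "\<phi> \<in> t"
    using theory_taut_imp2[OF t _ _ neg_box, of "Imp (Neg \<phi>) (nfill f (Box c))" \<phi>]
    by (auto simp: tautology_def Imp_def)
  with \<open>\<phi> \<notin> t\<close> show False ..
qed

definition decides :: "'i fm \<Rightarrow> 'i fm set \<Rightarrow> bool" where
  "decides a t \<longleftrightarrow> a \<in> t \<or>
     (Neg a \<in> t \<and> (\<forall>f c. a = nfill f (Box c) \<longrightarrow> (\<exists>b. box_free b \<and> Neg (nfill f (Ann b c)) \<in> t)))"

lemma decides_mono: "decides a s \<Longrightarrow> s \<subseteq> t \<Longrightarrow> decides a t"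
  unfolding decides_def by blast

lemma exists_deciding_extension:
  assumes t: "is_theory t" and \<phi>: "\<phi> \<notin> t"
  shows "\<exists>t'. is_theory t' \<and> \<phi> \<notin> t' \<and> t \<subseteq> t' \<and> decides a t'"
proof (cases "\<phi> \<notin> extend t a")
  case True
  then show ?thesis
    using is_theory_extend[OF t] mem_extend[OF t] subset_extend[OF t]
    unfolding decides_def by blast
next
  case False
  define s where "s = extend t (Neg a)"
  have s: "is_theory s" "\<phi> \<notin> s" "t \<subseteq> s" "Neg a \<in> s"
    using False not_mem_extend_or_extend_Neg[OF t \<phi>, of a]
      is_theory_extend[OF t] subset_extend[OF t] mem_extend[OF t]
    unfolding s_def by blast+
  show ?thesis
  proof (cases "\<exists>f c. a = nfill f (Box c)")
    case False
    then show ?thesis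
      using s unfolding decides_def by blast
  next
    case True
    then obtain f c where a: "a = nfill f (Box c)" by blast
    obtain b where b: "box_free b" "\<phi> \<notin> extend s (Neg (nfill f (Ann b c)))"
      using exists_DR5_witness[OF s(1,2)] s(4) a by blast
    let ?t' = "extend s (Neg (nfill f (Ann b c)))"
    have "decides a ?t'"
      unfolding decides_def
    proof (intro disjI2 conjI allI impI)
      show "Neg a \<in> ?t'"
        using s(4) subset_extend[OF s(1)] by blast
      show "\<exists>b. box_free b \<and> Neg (nfill f' (Ann b c')) \<in> ?t'" if "a = nfill f' (Box c')" for f' c'
        using that a nfill_Box_inject[of f c f' c'] b(1) mem_extend[OF s(1)] by auto
    qed
    then show ?thesis
      using b(2) is_theory_extend[OF s(1)] subset_extend[OF s(1)] s(3) by blast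
  qed
qed

lemma max_consistent_theory_if_decides:
  assumes derivable: "{a. derivable a} \<subseteq> y"
    and mp: "\<And>a b. Imp a b \<in> y \<Longrightarrow> a \<in> y \<Longrightarrow> b \<in> y"
    and Bot: "Bot \<notin> y"
    and decides: "\<And>a. decides a y"
  shows "max_consistent_theory y"
proof -
  have ex_falso: "a \<in> s \<Longrightarrow> Neg a \<in> s \<Longrightarrow> Bot \<in> s"
    if "{a. derivable a} \<subseteq> s" "\<And>a b. Imp a b \<in> s \<Longrightarrow> a \<in> s \<Longrightarrow> b \<in> s" for a s
  proof -
    have "derivable (Imp a (Imp (Neg a) Bot))"
      by (intro derivable.Ax axiom.A0) (simp add: tautology_def Imp_def Bot_def)
    with that(1) have "Imp a (Imp (Neg a) Bot) \<in> s" by blast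
    then show "a \<in> s \<Longrightarrow> Neg a \<in> s \<Longrightarrow> Bot \<in> s"
      using that(2) by blast
  qed
  have contradiction: "a \<in> y \<Longrightarrow> Neg a \<in> y \<Longrightarrow> False" for a
    using ex_falso[of y a, OF derivable] mp Bot by blast
  have "is_theory y"
    unfolding is_theory_def
  proof (intro conjI allI impI derivable)
    show "Imp a b \<in> y \<Longrightarrow> a \<in> y \<Longrightarrow> b \<in> y" for a b by (fact mp)
    fix f c assume instances: "\<forall>b. box_free b \<longrightarrow> nfill f (Ann b c) \<in> y"
    show "nfill f (Box c) \<in> y"
    proof (rule ccontr)
      assume "nfill f (Box c) \<notin> y"
      then obtain b where "box_free b" "Neg (nfill f (Ann b c)) \<in> y"
        using decides[of "nfill f (Box c)"] unfolding decides_def by blast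
      then show False
        using instances contradiction by blast
    qed
  qed
  moreover have "\<not> consistent_set s" if "y \<subset> s" for s
  proof
    assume "consistent_set s"
    then obtain z where z: "is_theory z" "Bot \<notin> z" "s \<subseteq> z"
      unfolding consistent_set_def consistent_theory_def by blast
    obtain a where "a \<in> s" "a \<notin> y" using \<open>y \<subset> s\<close> by blast
    then have "a \<in> z" "Neg a \<in> z"
      using decides[of a] \<open>y \<subset> s\<close> z(3) unfolding decides_def by blast+
    then show False
      using z ex_falso[of z a] theory_derivable[of z] theory_mp[of z] by blast
  qed
  ultimately show ?thesis
    using Bot unfolding max_consistent_theory_def consistent_theory_def by blast
qed

fun lindenbaum_chain :: "('i::countable) fm \<Rightarrow> 'i fm set \<Rightarrow> nat \<Rightarrow> 'i fm set" where
  "lindenbaum_chain \<phi> t 0 = t"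
| "lindenbaum_chain \<phi> t (Suc n) =
     (SOME t'. is_theory t' \<and> \<phi> \<notin> t' \<and> lindenbaum_chain \<phi> t n \<subseteq> t' \<and> decides (from_nat n) t')"

lemma lindenbaum_chain_Suc:
  assumes "is_theory (lindenbaum_chain \<phi> t n)" "\<phi> \<notin> lindenbaum_chain \<phi> t n"
  shows "is_theory (lindenbaum_chain \<phi> t (Suc n)) \<and> \<phi> \<notin> lindenbaum_chain \<phi> t (Suc n)
    \<and> lindenbaum_chain \<phi> t n \<subseteq> lindenbaum_chain \<phi> t (Suc n)
    \<and> decides (from_nat n) (lindenbaum_chain \<phi> t (Suc n))"
  unfolding lindenbaum_chain.simps
  by (rule someI_ex) (rule exists_deciding_extension[OF assms])

lemma lindenbaum_chain_theory:
  assumes "is_theory t" "\<phi> \<notin> t"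
  shows "is_theory (lindenbaum_chain \<phi> t n) \<and> \<phi> \<notin> lindenbaum_chain \<phi> t n"
  by (induction n) (use assms lindenbaum_chain_Suc in auto)

lemma lindenbaum:
  fixes t :: "('i::countable) fm set"
  assumes t: "is_theory t" and \<phi>: "\<phi> \<notin> t"
  shows "\<exists>y. max_consistent_theory y \<and> t \<subseteq> y \<and> \<phi> \<notin> y"
proof -
  let ?X = "lindenbaum_chain \<phi> t"
  define y where "y = (\<Union>n. ?X n)"
  have X: "is_theory (?X n)" "\<phi> \<notin> ?X n" for n
    using lindenbaum_chain_theory[OF t \<phi>] by auto
  have step: "?X n \<subseteq> ?X (Suc n)" "decides (from_nat n) (?X (Suc n))" for n
    using lindenbaum_chain_Suc[OF X] by auto
  have mono: "?X m \<subseteq> ?X n" if "m \<le> n" for m n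
    using lift_Suc_mono_le[of ?X, OF step(1) that] .
  have X_y: "?X n \<subseteq> y" for n
    unfolding y_def by blast
  have \<phi>_y: "\<phi> \<notin> y"
    unfolding y_def using X(2) by blast
  have mp: "b \<in> y" if imp: "Imp a b \<in> y" and a: "a \<in> y" for a b
  proof -
    obtain m n where "Imp a b \<in> ?X m" "a \<in> ?X n"
      using imp a unfolding y_def by blast
    then have "Imp a b \<in> ?X (max m n)" "a \<in> ?X (max m n)"
      using mono[of m "max m n"] mono[of n "max m n"] by auto
    then show ?thesis
      using theory_mp[OF X(1)] X_y by blast
  qed
  have "max_consistent_theory y"
  proof (rule max_consistent_theory_if_decides)
    show "{a. derivable a} \<subseteq> y"
      using theory_derivable[OF X(1)] X_y by blast
    have "tautology (Imp Bot \<phi>)"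
      by (simp add: tautology_def Imp_def Bot_def)
    then show "Bot \<notin> y"
      using mp[of Bot \<phi>] theory_tautology[OF X(1)] X_y \<phi>_y by blast
    show "decides a y" for a
      using decides_mono[OF step(2) X_y, of "to_nat a"] by simp
  qed (fact mp)
  then show ?thesis
    using X_y[of 0] \<phi>_y by auto
qed

lemma is_theory_Kset:
  fixes x :: "'i fm set"
  assumes x: "is_theory x"
  shows "is_theory (Kset i x)"
  unfolding is_theory_def
proof (intro conjI allI impI subsetI)
  fix c :: "'i fm" assume "c \<in> {c. derivable c}"
  then show "c \<in> Kset i x"
    by (simp add: Kset_def theory_derivable[OF x] derivable.NecK)
next
  fix a b assume "Imp a b \<in> Kset i x" "a \<in> Kset i x"
  then show "b \<in> Kset i x"
    using theory_derivable[OF x, OF derivable.Ax[OF axiom.AK]] theory_mp[OF x]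
    unfolding Kset_def by blast
next
  fix f c assume "\<forall>b. box_free b \<longrightarrow> nfill f (Ann b c) \<in> Kset i x"
  then have "nfill (NK i f) (Box c) \<in> x"
    by (intro theory_DR5[OF x]) (auto simp: Kset_def)
  then show "nfill f (Box c) \<in> Kset i x"
    by (simp add: Kset_def)
qed

theorem mainTheorem19:
  fixes x :: "('i::finite) fm set" and \<phi> :: "'i fm" and i :: 'i
  assumes "is_theory x"
    and "K i \<phi> \<notin> x"
  shows "\<exists>y. max_consistent_theory y \<and> Kset i x \<subseteq> y \<and> \<phi> \<notin> y"
proof -
  have "\<phi> \<notin> Kset i x"
    using assms(2) by (simp add: Kset_def)
  then show ?thesis
    using lindenbaum[OF is_theory_Kset[OF assms(1)]] by blast
qed

end
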